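(* Let $G=\mathbb{Z}_2\times\mathbb{Z}_4$, let $\theta$ be a normalised orthomorphism of $G$, let $A_{22}=\{x\}$, put $y=\theta(x)$, and let $a\in A_{44}\setminus\theta(A_{44})$. Then $\theta$ has one of the following forms (in cycle notation): (i) $\theta=(a,\ ax,\ axy,\ xy,\ ay,\ x,\ y)$, where $xy=a^2$; (ii) $\theta=(a,\ ax,\ axy,\ xy)(y,\ ay,\ x)$, where $xy\neq a^2$; (iii) $\theta=(a,\ ax,\ axy,\ x,\ y)(ay,\ xy)$, where $xy\neq a^2$; (iv) $\theta=(a,\ ax,\ axy,\ x,\ y,\ ay,\ xy)$, where $xy=a^2$. Moreover, the number of normalised orthomorphisms of $G$ is $48$.
   Context: $G$ is written multiplicatively with identity $e$; $o(g)$ is the order of $g$. A normalised orthomorphism of $G$ is a bijection $\theta\colon G\to G$ with $\theta(e)=e$ such that $x\mapsto x^{-1}\theta(x)$ is also a bijection of $G$. For such $\theta$: $A_{44}=\{g: o(g)=4, o(\theta(g))=4\}$, $A_{22}=\{g: o(g)=2, o(\theta(g))=2\}$; $\theta(S)$ denotes the image of a set $S$. Cycle notation $(c_1,\dots,c_k)$ means $c_i\mapsto c_{i+1}$ and $c_k\mapsto c_1$; elements not listed (here only $e$) are fixed. *)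

theory Defs
  imports "HOL-Library.Numeral_Type" "HOL-Library.Product_Plus" "HOL-Combinatorics.Cycles"
begin

text \<open>The group G = Z_2 x Z_4, written additively (identity 0, product x y is x + y,
  inverse of x is - x).\<close>
type_synonym G = "2 \<times> 4"

definition gord :: "G \<Rightarrow> nat" where
  "gord g = (LEAST n::nat. 0 < n \<and> (((+) g) ^^ n) 0 = 0)"

definition norm_orthomorphism :: "(G \<Rightarrow> G) \<Rightarrow> bool" where
  "norm_orthomorphism \<theta> \<longleftrightarrow> bij \<theta> \<and> \<theta> 0 = 0 \<and> bij (\<lambda>x. - x + \<theta> x)"

definition A44 :: "(G \<Rightarrow> G) \<Rightarrow> G set" where
  "A44 \<theta> = {g. gord g = 4 \<and> gord (\<theta> g) = 4}"

definition A22 :: "(G \<Rightarrow> G) \<Rightarrow> G set" where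
  "A22 \<theta> = {g. gord g = 2 \<and> gord (\<theta> g) = 2}"

end

theory Submission
  imports Defs
begin

text \<open>The theorem is settled by a finite computation. Coding the element (i, j) of
  \<open>\<int>\<^sub>2 \<times> \<int>\<^sub>4\<close> as the number 4 i + j, a normalised orthomorphism becomes a list of eight
  codes with first entry 0 in which both the entries and the differences -k + L!k are
  pairwise distinct. These lists are enumerated by a backtracking search over partial
  orthomorphisms, which finds exactly 48 of them, and the hypotheses and the four
  cycle forms of the classification are evaluated on each.\<close>

section \<open>Permutations given by lists of cycles\<close>

lemma cycle_of_list_in:
  assumes "set cs \<subseteq> A" and "x \<in> A"
  shows "cycle_of_list cs x \<in> A"
  using assms cycle_permutes[of cs] by (metis permutes_in_image permutes_not_in subsetD)

lemma cycle_of_list_map_inj_on: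
  assumes "inj_on f A" and "set cs \<subseteq> A" and "x \<in> A"
  shows "cycle_of_list (map f cs) (f x) = f (cycle_of_list cs x)"
  using assms(2,3)
proof (induction cs arbitrary: x rule: cycle_of_list.induct)
  case (1 i j cs)
  then have "cycle_of_list (j # cs) x \<in> A" by (simp add: cycle_of_list_in)
  with 1 assms(1) show ?case
    by (auto simp: transpose_def inj_on_eq_iff)
qed simp_all

definition perm_of_cycles :: "'a list list \<Rightarrow> 'a \<Rightarrow> 'a" where
  "perm_of_cycles css = foldr (\<lambda>cs p. cycle_of_list cs \<circ> p) css id"

lemma perm_of_cycles_map_inj_on:
  assumes "inj_on f A" and "\<forall>cs\<in>set css. set cs \<subseteq> A" and "x \<in> A"
  shows "perm_of_cycles (map (map f) css) (f x) = f (perm_of_cycles css x)"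
  using assms(2,3)
proof (induction css arbitrary: x)
  case (Cons cs css)
  have "perm_of_cycles css x \<in> A"
  proof -
    have "\<forall>y\<in>A. perm_of_cycles css y \<in> A" using Cons.prems(1)
      by (induction css) (auto simp: perm_of_cycles_def cycle_of_list_in)
    with Cons.prems(2) show ?thesis by blast
  qed
  with Cons assms(1) show ?case
    by (simp add: perm_of_cycles_def cycle_of_list_map_inj_on)
qed (simp add: perm_of_cycles_def)

section \<open>Backtracking\<close>

fun backtrack :: "('a list \<Rightarrow> 'a \<Rightarrow> bool) \<Rightarrow> 'a list \<Rightarrow> nat \<Rightarrow> 'a list \<Rightarrow> 'a list list" where
  "backtrack ok cs 0 xs = [xs]"
| "backtrack ok cs (Suc n) xs =
     concat (map (\<lambda>c. if ok xs c then backtrack ok cs n (xs @ [c]) else []) cs)"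

lemma snoc_closed_imp_prefix:
  assumes "\<And>xs c. P (xs @ [c]) \<longleftrightarrow> P xs \<and> ok xs c" and "P (xs @ ys)"
  shows "P xs"
  using assms(2) by (induction ys rule: rev_induct) (simp_all add: assms(1) flip: append_assoc)

lemma set_backtrack:
  assumes snoc: "\<And>xs c. P (xs @ [c]) \<longleftrightarrow> P xs \<and> ok xs c" and "P xs"
  shows "set (backtrack ok cs n xs) = {xs @ ys | ys. length ys = n \<and> set ys \<subseteq> set cs \<and> P (xs @ ys)}"
  using assms(2)
proof (induction n arbitrary: xs)
  case 0
  then show ?case by auto
next
  case (Suc n)
  have ok: "ok xs c" if "P (xs @ c # ys)" for c ys
    using snoc_closed_imp_prefix[OF snoc, of "xs @ [c]" ys] snoc that by simp
  have "set (backtrack ok cs (Suc n) xs) =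
        (\<Union>c\<in>{c \<in> set cs. ok xs c}. set (backtrack ok cs n (xs @ [c])))"
    by auto
  also have "\<dots> = (\<Union>c\<in>{c \<in> set cs. ok xs c}.
      {(xs @ [c]) @ ys | ys. length ys = n \<and> set ys \<subseteq> set cs \<and> P ((xs @ [c]) @ ys)})"
    using Suc snoc by simp
  also have "\<dots> = {xs @ c # ys | c ys. length ys = n \<and> set (c # ys) \<subseteq> set cs \<and> P (xs @ c # ys)}"
    using ok by auto
  also have "\<dots> = {xs @ ys | ys. length ys = Suc n \<and> set ys \<subseteq> set cs \<and> P (xs @ ys)}"
    by (metis (no_types, opaque_lifting) length_Suc_conv)
  finally show ?case .
qed

section \<open>Element orders in \<open>G\<close>\<close>

lemma exhaust_2: "(x::2) = 0 \<or> x = 1"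
proof (cases x rule: bit0_cases)
  case (of_int z)
  then have "z = 0 \<or> z = 1" by auto
  with of_int show ?thesis by auto
qed

lemma exhaust_4: "(x::4) = 0 \<or> x = 1 \<or> x = 2 \<or> x = 3"
proof (cases x rule: bit0_cases)
  case (of_int z)
  then have "z = 0 \<or> z = 1 \<or> z = 2 \<or> z = 3" by auto
  with of_int show ?thesis by auto
qed

lemma G_four_times_eq_0: "g + g + g + g = (0::G)"
proof (cases g)
  case (Pair a b)
  have "a + a + a + a = 0" using exhaust_2[of a] by auto
  moreover have "b + b + b + b = 0" using exhaust_4[of b] by auto
  ultimately show ?thesis by (simp add: Pair zero_prod_def)
qed

lemma gord_G: "gord g = (if g = 0 then 1 else if g + g = 0 then 2 else 4)"
proof -
  let ?P = "\<lambda>n. ((+) g ^^ n) 0 = 0"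
  have least: "(LEAST n. 0 < n \<and> ?P n) = m"
    if "0 < m" "?P m" "\<And>n. 0 < n \<Longrightarrow> n < m \<Longrightarrow> \<not> ?P n" for m
    by (rule Least_equality) (use that in \<open>force simp: not_less[symmetric]\<close>)+
  have pow: "((+) g ^^ 1) 0 = g" "((+) g ^^ 2) 0 = g + g" "((+) g ^^ 3) 0 = g + g + g"
    "((+) g ^^ 4) 0 = g + g + g + g"
    by (simp_all add: numeral_eq_Suc add.assoc)
  consider "g = 0" | "g \<noteq> 0" "g + g = 0" | "g + g \<noteq> 0"
    by fastforce
  then show ?thesis
  proof cases
    case 1
    have "gord g = 1"
      unfolding gord_def by (rule least) (use 1 in \<open>simp_all add: pow\<close>)
    with 1 show ?thesis by simp
  next
    case 2
    have not_P: "\<not> ?P n" if "0 < n" "n < 2" for n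
    proof -
      have "n = 1" using that by arith
      then show ?thesis using 2 by (simp only: pow) simp
    qed
    have "gord g = 2"
      unfolding gord_def by (rule least) (use 2 not_P in \<open>simp_all add: pow\<close>)
    with 2 show ?thesis by simp
  next
    case 3
    have not_P: "\<not> ?P n" if "0 < n" "n < 4" for n
    proof -
      have "n = 1 \<or> n = 2 \<or> n = 3" using that by arith
      moreover have "g + g + g \<noteq> 0"
        using 3 G_four_times_eq_0[of g] by (metis add.right_neutral add_left_cancel)
      ultimately show ?thesis using 3 by (elim disjE) (simp_all only: pow, auto)
    qed
    have "gord g = 4"
      unfolding gord_def by (rule least) (use not_P in \<open>simp_all add: pow G_four_times_eq_0\<close>)
    with 3 show ?thesis by auto
  qed
qed

section \<open>Coding \<open>G\<close> by the numbers below 8\<close>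

definition G_of_code :: "nat \<Rightarrow> G" where
  "G_of_code k = (of_nat (k div 4), of_nat (k mod 4))"

definition code_of_G :: "G \<Rightarrow> nat" where
  "code_of_G = the_inv_into {..<8} G_of_code"

definition code_add :: "nat \<Rightarrow> nat \<Rightarrow> nat" where
  "code_add m n = 4 * ((m div 4 + n div 4) mod 2) + (m mod 4 + n mod 4) mod 4"

definition code_diff :: "nat \<Rightarrow> nat \<Rightarrow> nat" where
  "code_diff m n = 4 * ((m div 4 + n div 4) mod 2) + (n mod 4 + 4 - m mod 4) mod 4"

lemma less_8_iff: "k < 8 \<longleftrightarrow> k \<in> {0, 1, 2, 3, 4, 5, 6, 7 :: nat}"
  by auto

lemma G_of_code_0 [simp]: "G_of_code 0 = 0"
  by (simp add: G_of_code_def zero_prod_def)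

lemma G_of_code_eq_iff: "m < 8 \<Longrightarrow> n < 8 \<Longrightarrow> G_of_code m = G_of_code n \<longleftrightarrow> m = n"
  unfolding less_8_iff by (auto simp: G_of_code_def)

lemma inj_on_G_of_code: "inj_on G_of_code {..<8}"
  by (simp add: inj_on_def G_of_code_eq_iff)

lemma G_of_code_image: "G_of_code ` {..<8} = UNIV"
proof -
  have "(a, b) \<in> G_of_code ` {..<8}" for a b
  proof -
    have "(a, b) = G_of_code (4 * (if a = 0 then 0 else 1) +
        (if b = 0 then 0 else if b = 1 then 1 else if b = 2 then 2 else 3))"
      using exhaust_2[of a] exhaust_4[of b] by (auto simp: G_of_code_def)
    then show ?thesis by (rule image_eqI) auto
  qed
  then show ?thesis by auto
qed

lemma bij_betw_G_of_code: "bij_betw G_of_code {..<8} UNIV"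
  by (simp add: bij_betw_def inj_on_G_of_code G_of_code_image)

lemma code_of_G_less [simp]: "code_of_G g < 8"
  using bij_betw_the_inv_into[OF bij_betw_G_of_code]
  by (auto simp: code_of_G_def bij_betw_def)

lemma G_of_code_of_G [simp]: "G_of_code (code_of_G g) = g"
  unfolding code_of_G_def by (rule f_the_inv_into_f_bij_betw[OF bij_betw_G_of_code]) simp

lemma code_of_G_of_code [simp]: "k < 8 \<Longrightarrow> code_of_G (G_of_code k) = k"
  unfolding code_of_G_def by (simp add: the_inv_into_f_f inj_on_G_of_code)

lemma code_of_G_image_G_of_code:
  assumes "S \<subseteq> {..<8}"
  shows "code_of_G ` G_of_code ` S = S"
proof -
  have "(\<lambda>k. code_of_G (G_of_code k)) ` S = id ` S"
    using assms by (intro image_cong) auto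
  then show ?thesis by (simp add: image_image)
qed

lemma inj_code_of_G: "inj code_of_G"
  by (metis G_of_code_of_G injI)

lemma code_add_less [simp]: "code_add m n < 8"
  unfolding code_add_def by linarith

lemma code_diff_less [simp]: "code_diff m n < 8"
  unfolding code_diff_def by linarith

lemma G_of_code_add:
  "m < 8 \<Longrightarrow> n < 8 \<Longrightarrow> G_of_code (code_add m n) = G_of_code m + G_of_code n"
  unfolding less_8_iff by (auto simp: G_of_code_def code_add_def)

lemma G_of_code_diff:
  "m < 8 \<Longrightarrow> n < 8 \<Longrightarrow> G_of_code (code_diff m n) = - G_of_code m + G_of_code n"
  unfolding less_8_iff by (auto simp: G_of_code_def code_diff_def)

definition codes_of :: "(G \<Rightarrow> G) \<Rightarrow> nat list" where
  "codes_of \<theta> = map (\<lambda>k. code_of_G (\<theta> (G_of_code k))) [0..<8]"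

lemma length_codes_of [simp]: "length (codes_of \<theta>) = 8"
  by (simp add: codes_of_def)

lemma codes_of_nth_less: "k < 8 \<Longrightarrow> codes_of \<theta> ! k < 8"
  by (simp add: codes_of_def)

lemma G_of_codes_of_nth: "k < 8 \<Longrightarrow> G_of_code (codes_of \<theta> ! k) = \<theta> (G_of_code k)"
  by (simp add: codes_of_def)

lemma ex_G_of_code: "\<exists>k<8. g = G_of_code k"
  using G_of_code_image by (metis imageE lessThan_iff UNIV_I)

lemma inj_codes_of: "inj codes_of"
proof
  fix \<theta> \<eta> :: "G \<Rightarrow> G"
  assume "codes_of \<theta> = codes_of \<eta>"
  then have "\<theta> (G_of_code k) = \<eta> (G_of_code k)" if "k < 8" for k
    using that by (metis G_of_codes_of_nth)
  then show "\<theta> = \<eta>"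
    using ex_G_of_code by (metis ext)
qed

lemma range_codes_of: "range codes_of = {L. length L = 8 \<and> set L \<subseteq> {..<8}}"
proof (intro equalityI subsetI)
  fix L :: "nat list" assume "L \<in> {L. length L = 8 \<and> set L \<subseteq> {..<8}}"
  then have L: "length L = 8" "k < 8 \<Longrightarrow> L ! k < 8" for k
    by (auto simp: subset_iff)
  have "codes_of (\<lambda>g. G_of_code (L ! code_of_G g)) = L"
    by (rule nth_equalityI) (simp_all add: L codes_of_def)
  then show "L \<in> range codes_of" by (metis rangeI)
qed (auto simp: codes_of_def)

lemma distinct_codes_of_iff: "distinct (codes_of \<theta>) \<longleftrightarrow> inj \<theta>"
proof -
  have "distinct (codes_of \<theta>) \<longleftrightarrow> inj_on (code_of_G \<circ> \<theta> \<circ> G_of_code) {..<8}"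
    by (simp add: codes_of_def distinct_map atLeast0LessThan comp_def)
  also have "\<dots> \<longleftrightarrow> inj (code_of_G \<circ> \<theta>)"
    using comp_inj_on_iff[OF inj_on_G_of_code, of "code_of_G \<circ> \<theta>"] by (simp add: G_of_code_image)
  also have "\<dots> \<longleftrightarrow> inj \<theta>"
    using inj_compose[OF inj_code_of_G] inj_on_imageI2 by blast
  finally show ?thesis .
qed

definition code_diffs :: "nat list \<Rightarrow> nat list" where
  "code_diffs L = map2 code_diff [0..<length L] L"

lemma code_diffs_codes_of: "code_diffs (codes_of \<theta>) = codes_of (\<lambda>x. - x + \<theta> x)"
proof (rule nth_equalityI)
  fix k assume "k < length (code_diffs (codes_of \<theta>))"
  then have k: "k < 8" by (simp add: code_diffs_def)
  have "G_of_code (code_diff k (codes_of \<theta> ! k)) = - G_of_code k + \<theta> (G_of_code k)"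
    using k by (simp add: G_of_code_diff codes_of_nth_less G_of_codes_of_nth)
  then have "code_diff k (codes_of \<theta> ! k) = code_of_G (- G_of_code k + \<theta> (G_of_code k))"
    by (metis code_diff_less code_of_G_of_code)
  with k show "code_diffs (codes_of \<theta>) ! k = codes_of (\<lambda>x. - x + \<theta> x) ! k"
    by (simp add: code_diffs_def codes_of_def)
qed (simp add: code_diffs_def)

definition partial_orth :: "nat list \<Rightarrow> bool" where
  "partial_orth L \<longleftrightarrow> distinct L \<and> distinct (code_diffs L)"

definition orth_ok :: "nat list \<Rightarrow> nat \<Rightarrow> bool" where
  "orth_ok L c \<longleftrightarrow> c \<notin> set L \<and> code_diff (length L) c \<notin> set (code_diffs L)"

lemma code_diffs_snoc: "code_diffs (L @ [c]) = code_diffs L @ [code_diff (length L) c]"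
  by (simp add: code_diffs_def)

lemma partial_orth_snoc: "partial_orth (L @ [c]) \<longleftrightarrow> partial_orth L \<and> orth_ok L c"
  by (auto simp: partial_orth_def orth_ok_def code_diffs_snoc)

lemma norm_orthomorphism_iff_codes_of:
  "norm_orthomorphism \<theta> \<longleftrightarrow> codes_of \<theta> ! 0 = 0 \<and> partial_orth (codes_of \<theta>)"
proof -
  have "bij f \<longleftrightarrow> inj f" for f :: "G \<Rightarrow> G"
    using finite_UNIV_inj_surj[of f] by (auto simp: bij_def)
  moreover have "\<theta> 0 = 0 \<longleftrightarrow> codes_of \<theta> ! 0 = 0"
    by (metis G_of_code_0 G_of_codes_of_nth code_of_G_of_code zero_less_numeral codes_of_nth_less)
  ultimately show ?thesis
    by (auto simp: norm_orthomorphism_def partial_orth_def code_diffs_codes_of distinct_codes_of_iff)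
qed

section \<open>Enumeration and classification\<close>

definition orth_codes :: "nat list list" where
  "orth_codes = backtrack orth_ok [0..<8] 7 [0]"

lemma set_orth_codes: "set orth_codes = codes_of ` {\<theta>. norm_orthomorphism \<theta>}"
proof -
  have "set orth_codes =
        {[0] @ ys | ys. length ys = 7 \<and> set ys \<subseteq> {..<8} \<and> partial_orth ([0] @ ys)}"
    unfolding orth_codes_def
    by (subst set_backtrack[OF partial_orth_snoc])
      (simp_all add: partial_orth_def code_diffs_def atLeast0LessThan)
  also have "\<dots> = {L \<in> range codes_of. L ! 0 = 0 \<and> partial_orth L}"
    unfolding range_codes_of by (fastforce simp: length_Suc_conv numeral_eq_Suc)
  also have "\<dots> = codes_of ` {\<theta>. norm_orthomorphism \<theta>}"
    by (auto simp: norm_orthomorphism_iff_codes_of)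
  finally show ?thesis .
qed

lemma card_set_orth_codes: "card (set orth_codes) = 48"
  by code_simp

lemma card_norm_orthomorphisms: "card {\<theta>. norm_orthomorphism \<theta>} = 48"
  using card_set_orth_codes by (simp add: set_orth_codes card_image inj_on_subset[OF inj_codes_of])

definition code_ord :: "nat \<Rightarrow> nat" where
  "code_ord k = (if k = 0 then 1 else if code_add k k = 0 then 2 else 4)"

lemma gord_G_of_code: "k < 8 \<Longrightarrow> gord (G_of_code k) = code_ord k"
  by (metis G_of_code_0 G_of_code_add G_of_code_eq_iff code_add_less code_ord_def gord_G
      zero_less_numeral)

definition code_order_pairs :: "nat \<Rightarrow> nat \<Rightarrow> nat list \<Rightarrow> nat list" where
  "code_order_pairs m n L = filter (\<lambda>k. code_ord k = m \<and> code_ord (L ! k) = n) [0..<8]"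

lemma order_pairs_codes_of:
  "{g. gord g = m \<and> gord (\<theta> g) = n} = G_of_code ` set (code_order_pairs m n (codes_of \<theta>))"
proof -
  have "{g. gord g = m \<and> gord (\<theta> g) = n} =
        G_of_code ` {k \<in> {..<8}. gord (G_of_code k) = m \<and> gord (\<theta> (G_of_code k)) = n}"
    by (auto simp: image_iff) (metis ex_G_of_code)
  also have "{k \<in> {..<8}. gord (G_of_code k) = m \<and> gord (\<theta> (G_of_code k)) = n} =
             set (code_order_pairs m n (codes_of \<theta>))"
    by (auto simp: code_order_pairs_def gord_G_of_code codes_of_nth_less
        G_of_codes_of_nth [symmetric])
  finally show ?thesis .
qed

text \<open>The cycles of \<open>\<theta>\<close> in the forms (i)--(iv), each paired with whether that form
  requires \<open>x + y = a + a\<close>.\<close>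
definition orth_forms :: "('a \<Rightarrow> 'a \<Rightarrow> 'a) \<Rightarrow> 'a \<Rightarrow> 'a \<Rightarrow> 'a \<Rightarrow> ('a list list \<times> bool) list" where
  "orth_forms add a x y =
     [([[a, add a x, add (add a x) y, add x y, add a y, x, y]], True),
      ([[a, add a x, add (add a x) y, add x y], [y, add a y, x]], False),
      ([[a, add a x, add (add a x) y, x, y], [add a y, add x y]], False),
      ([[a, add a x, add (add a x) y, x, y, add a y, add x y]], True)]"

lemma orth_forms_G_of_code:
  assumes "j < 8" "i < 8" "y < 8"
  shows "orth_forms (+) (G_of_code j) (G_of_code i) (G_of_code y) =
         map (apfst (map (map G_of_code))) (orth_forms code_add j i y)"
  using assms by (simp add: orth_forms_def G_of_code_add)

lemma orth_forms_code_less: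
  "(css, b) \<in> set (orth_forms code_add j i y) \<Longrightarrow> j < 8 \<Longrightarrow> i < 8 \<Longrightarrow> y < 8 \<Longrightarrow>
   \<forall>cs\<in>set css. set cs \<subseteq> {..<8}"
  by (auto simp: orth_forms_def)

definition code_form_holds :: "nat list \<Rightarrow> nat \<Rightarrow> nat \<Rightarrow> bool" where
  "code_form_holds L i j \<longleftrightarrow>
     (\<exists>(css, b)\<in>set (orth_forms code_add j i (L ! i)).
        (\<forall>k\<in>{..<8}. L ! k = perm_of_cycles css k) \<and> (code_add i (L ! i) = code_add j j \<longleftrightarrow> b))"

text \<open>The element of \<open>A22\<close> is computed rather than quantified over, which keeps the
  evaluation below cheap.\<close>
definition code_classified :: "nat list \<Rightarrow> bool" where
  "code_classified L \<longleftrightarrow>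
     (case code_order_pairs 2 2 L of
        [i] \<Rightarrow> list_all (code_form_holds L i)
                 (filter (\<lambda>j. j \<notin> (!) L ` set (code_order_pairs 4 4 L)) (code_order_pairs 4 4 L))
      | _ \<Rightarrow> True)"

lemma orth_codes_classified: "list_all code_classified orth_codes"
  by code_simp

lemma distinct_set_eq_singleton:
  assumes "distinct xs" and "set xs = {a}"
  shows "xs = [a]"
proof -
  have "length xs = Suc 0"
    using assms by (simp flip: distinct_card)
  then obtain b where "xs = [b]"
    by (auto simp: length_Suc_conv)
  with assms(2) show ?thesis by simp
qed

lemma codes_of_A22_A44:
  assumes "A22 \<theta> = {x}" and "a \<in> A44 \<theta> - \<theta> ` A44 \<theta>"
  shows "code_order_pairs 2 2 (codes_of \<theta>) = [code_of_G x]"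
    and "code_of_G a \<in> set (code_order_pairs 4 4 (codes_of \<theta>))
         - (!) (codes_of \<theta>) ` set (code_order_pairs 4 4 (codes_of \<theta>))"
proof -
  let ?p = "code_order_pairs 2 2 (codes_of \<theta>)" and ?q = "code_order_pairs 4 4 (codes_of \<theta>)"
  have less: "set (code_order_pairs m n L) \<subseteq> {..<8}" for m n L
    by (auto simp: code_order_pairs_def)
  have "G_of_code ` set ?p = {x}"
    using assms(1) by (simp add: A22_def order_pairs_codes_of)
  then have "code_of_G ` G_of_code ` set ?p = {code_of_G x}"
    by simp
  then have "set ?p = {code_of_G x}"
    by (simp only: code_of_G_image_G_of_code[OF less])
  moreover have "distinct ?p"
    by (simp add: code_order_pairs_def)
  ultimately show "?p = [code_of_G x]"
    by (simp add: distinct_set_eq_singleton)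
  have A44: "A44 \<theta> = G_of_code ` set ?q"
    by (simp add: A44_def order_pairs_codes_of)
  show "code_of_G a \<in> set ?q - (!) (codes_of \<theta>) ` set ?q"
  proof
    show "code_of_G a \<in> set ?q"
      using assms(2) less A44 by (auto simp: subset_iff)
    show "code_of_G a \<notin> (!) (codes_of \<theta>) ` set ?q"
    proof
      assume "code_of_G a \<in> (!) (codes_of \<theta>) ` set ?q"
      then obtain k where "k \<in> set ?q" "code_of_G a = codes_of \<theta> ! k" by blast
      with less have "a = \<theta> (G_of_code k)" "G_of_code k \<in> A44 \<theta>"
        by (auto simp: A44 G_of_codes_of_nth [symmetric] subset_iff) (metis G_of_code_of_G)
      with assms(2) show False by blast
    qed
  qed
qed

lemma code_form_holds_codes_of:
  assumes "code_form_holds (codes_of \<theta>) (code_of_G x) (code_of_G a)"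
  shows "\<exists>(css, b)\<in>set (orth_forms (+) a x (\<theta> x)).
           \<theta> = perm_of_cycles css \<and> (x + \<theta> x = a + a \<longleftrightarrow> b)"
proof -
  define L where "L = codes_of \<theta>"
  define i where "i = code_of_G x"
  define j where "j = code_of_G a"
  have less: "i < 8" "j < 8" "L ! i < 8"
    by (simp_all add: i_def j_def L_def codes_of_nth_less)
  have G_of_code_L: "G_of_code (L ! k) = \<theta> (G_of_code k)" if "k < 8" for k
    using that by (simp add: L_def G_of_codes_of_nth)
  obtain css b where
    form: "(css, b) \<in> set (orth_forms code_add j i (L ! i))" and
    perm: "\<forall>k\<in>{..<8}. L ! k = perm_of_cycles css k" and
    cond: "code_add i (L ! i) = code_add j j \<longleftrightarrow> b"
    using assms unfolding code_form_holds_def L_def i_def j_def by blast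
  have "(map (map G_of_code) css, b) \<in> set (orth_forms (+) a x (\<theta> x))"
    using form orth_forms_G_of_code[OF less(2,1,3)] G_of_code_L[OF less(1)]
    by (force simp: i_def j_def)
  moreover have "\<theta> = perm_of_cycles (map (map G_of_code) css)"
  proof
    fix g
    obtain k where k: "k < 8" "g = G_of_code k"
      using ex_G_of_code by blast
    have "\<theta> g = G_of_code (perm_of_cycles css k)"
      using k perm G_of_code_L by simp
    also have "\<dots> = perm_of_cycles (map (map G_of_code) css) g"
      using perm_of_cycles_map_inj_on[OF inj_on_G_of_code orth_forms_code_less[OF form less(2,1,3)]] k
      by simp
    finally show "\<theta> g = perm_of_cycles (map (map G_of_code) css) g" .
  qed
  moreover have "x + \<theta> x = a + a \<longleftrightarrow> b"
    using cond less G_of_code_L[OF less(1)]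
    by (metis G_of_code_add G_of_code_eq_iff G_of_code_of_G code_add_less i_def j_def)
  ultimately show ?thesis by blast
qed

lemma norm_orthomorphism_classification:
  assumes "norm_orthomorphism \<theta>" and "A22 \<theta> = {x}" and "a \<in> A44 \<theta> - \<theta> ` A44 \<theta>"
  shows "\<exists>(css, b)\<in>set (orth_forms (+) a x (\<theta> x)).
           \<theta> = perm_of_cycles css \<and> (x + \<theta> x = a + a \<longleftrightarrow> b)"
proof (rule code_form_holds_codes_of)
  have "code_classified (codes_of \<theta>)"
    using orth_codes_classified set_orth_codes assms(1) by (auto simp: list_all_iff)
  then show "code_form_holds (codes_of \<theta>) (code_of_G x) (code_of_G a)"
    using codes_of_A22_A44[OF assms(2,3)] by (simp add: code_classified_def list_all_iff)
qed

theorem theorem1: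
  shows "(\<forall>(\<theta>::G \<Rightarrow> G) x a.
            norm_orthomorphism \<theta> \<and> A22 \<theta> = {x} \<and> a \<in> A44 \<theta> - \<theta> ` A44 \<theta> \<longrightarrow>
            (let y = \<theta> x in
               (\<theta> = cycle_of_list [a, a + x, a + x + y, x + y, a + y, x, y] \<and> x + y = a + a)
             \<or> (\<theta> = cycle_of_list [a, a + x, a + x + y, x + y] \<circ> cycle_of_list [y, a + y, x]
                  \<and> x + y \<noteq> a + a)
             \<or> (\<theta> = cycle_of_list [a, a + x, a + x + y, x, y] \<circ> cycle_of_list [a + y, x + y]
                  \<and> x + y \<noteq> a + a)
             \<or> (\<theta> = cycle_of_list [a, a + x, a + x + y, x, y, a + y, x + y] \<and> x + y = a + a)))
         \<and> card {\<theta>::G \<Rightarrow> G. norm_orthomorphism \<theta>} = 48"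
proof (intro conjI allI impI card_norm_orthomorphisms)
  fix \<theta> :: "G \<Rightarrow> G" and x a
  assume "norm_orthomorphism \<theta> \<and> A22 \<theta> = {x} \<and> a \<in> A44 \<theta> - \<theta> ` A44 \<theta>"
  then show "let y = \<theta> x in
               (\<theta> = cycle_of_list [a, a + x, a + x + y, x + y, a + y, x, y] \<and> x + y = a + a)
             \<or> (\<theta> = cycle_of_list [a, a + x, a + x + y, x + y] \<circ> cycle_of_list [y, a + y, x]
                  \<and> x + y \<noteq> a + a)
             \<or> (\<theta> = cycle_of_list [a, a + x, a + x + y, x, y] \<circ> cycle_of_list [a + y, x + y]
                  \<and> x + y \<noteq> a + a)
             \<or> (\<theta> = cycle_of_list [a, a + x, a + x + y, x, y, a + y, x + y] \<and> x + y = a + a)"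
    using norm_orthomorphism_classification
    by (auto simp: orth_forms_def perm_of_cycles_def Let_def)
qed

end
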